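(* Let $G$ and $H$ be fermionic groups. Suppose $(-1)^F_H\neq 1$ in $H$, and let $H_b:=H/\langle(-1)^F_H\rangle$. Then \[ 1\to G\xrightarrow{i} G\otimes H\xrightarrow{\pi} H_b\to 1,\qquad i(g)=g\otimes 1,\quad \pi(g\otimes h)=[h], \] is an exact sequence of topological groups. If additionally the grading homomorphism $\theta_G$ of $G$ is nontrivial, then restricting to even parts gives an exact sequence \[ 1\to G_{ev}\xrightarrow{i}(G\otimes H)_{ev}\xrightarrow{\pi} H_b\to 1 . \] Here $G_{ev}=\ker\theta_G$, and $(G\otimes H)_{ev}$ is the kernel of the grading of $G\otimes H$.
   Context: A fermionic group is a topological group $G$ together with a central element $(-1)^F$ with $((-1)^F)^2=1$ and a continuous homomorphism $\theta:G\to\mathbb{Z}_2$ with $\theta((-1)^F)=0$. The fermionic tensor product $G\otimes H$ is the quotient space $(G\times H)/\langle((-1)^F_G,(-1)^F_H)\rangle$, with elements written $g\otimes h$. Its product is $(g_1\otimes h_1)(g_2\otimes h_2)=((-1)^F_G)^{\theta(g_2)\theta(h_1)}g_1g_2\otimes h_1h_2$. Its fermion parity is $(-1)^F_G\otimes 1$, and its grading is $\theta(g\otimes h)=\theta_G(g)+\theta_H(h)$. *)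

theory Defs
  imports "HOL-Analysis.Analysis" "HOL-Algebra.Algebra"
begin

definition topgroup :: "('a, 'm) monoid_scheme \<Rightarrow> 'a topology \<Rightarrow> bool" where
  "topgroup G T \<longleftrightarrow> group G \<and> topspace T = carrier G
     \<and> continuous_map (prod_topology T T) T (\<lambda>(x, y). x \<otimes>\<^bsub>G\<^esub> y)
     \<and> continuous_map T T (\<lambda>x. inv\<^bsub>G\<^esub> x)"

text \<open>Fermionic group (G, T, c, theta): c is the fermion parity (-1)^F, theta the grading.
  Z_2 is represented by bool with addition = exclusive or (True = 1), discrete topology.\<close>
definition fermionic :: "('a, 'm) monoid_scheme \<Rightarrow> 'a topology \<Rightarrow> 'a \<Rightarrow> ('a \<Rightarrow> bool) \<Rightarrow> bool" where
  "fermionic G T c \<theta> \<longleftrightarrow> topgroup G T \<and> c \<in> carrier G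
     \<and> (\<forall>x\<in>carrier G. c \<otimes>\<^bsub>G\<^esub> x = x \<otimes>\<^bsub>G\<^esub> c)
     \<and> c \<otimes>\<^bsub>G\<^esub> c = \<one>\<^bsub>G\<^esub>
     \<and> (\<forall>x\<in>carrier G. \<forall>y\<in>carrier G. \<theta> (x \<otimes>\<^bsub>G\<^esub> y) = (\<theta> x \<noteq> \<theta> y))
     \<and> continuous_map T (discrete_topology UNIV) \<theta>
     \<and> \<not> \<theta> c"

definition quotient_topology :: "'a topology \<Rightarrow> ('a \<Rightarrow> 'b) \<Rightarrow> 'b set \<Rightarrow> 'b topology" where
  "quotient_topology Tp f Y = topology (\<lambda>S. S \<subseteq> Y \<and> openin Tp {x \<in> topspace Tp. f x \<in> S})"

definition ftp_rel :: "('a, 'm) monoid_scheme \<Rightarrow> ('b, 'n) monoid_scheme \<Rightarrow> 'a \<Rightarrow> 'b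
    \<Rightarrow> (('a \<times> 'b) \<times> ('a \<times> 'b)) set" where
  "ftp_rel G H cG cH = {((g, h), (g', h')). g \<in> carrier G \<and> h \<in> carrier H
      \<and> g' \<in> carrier G \<and> h' \<in> carrier H
      \<and> ((g', h') = (g, h) \<or> (g', h') = (cG \<otimes>\<^bsub>G\<^esub> g, cH \<otimes>\<^bsub>H\<^esub> h))}"

definition ftp_elem :: "('a, 'm) monoid_scheme \<Rightarrow> ('b, 'n) monoid_scheme \<Rightarrow> 'a \<Rightarrow> 'b
    \<Rightarrow> 'a \<Rightarrow> 'b \<Rightarrow> ('a \<times> 'b) set" where
  "ftp_elem G H cG cH g h = ftp_rel G H cG cH `` {(g, h)}"

definition ftp :: "('a, 'm) monoid_scheme \<Rightarrow> ('b, 'n) monoid_scheme \<Rightarrow> 'a \<Rightarrow> 'b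
    \<Rightarrow> ('a \<Rightarrow> bool) \<Rightarrow> ('b \<Rightarrow> bool) \<Rightarrow> ('a \<times> 'b) set monoid" where
  "ftp G H cG cH \<theta>G \<theta>H =
     \<lparr> carrier = (carrier G \<times> carrier H) // ftp_rel G H cG cH,
       mult = (\<lambda>x y. let (g1, h1) = (SOME p. p \<in> x); (g2, h2) = (SOME p. p \<in> y) in
                 ftp_elem G H cG cH
                   (if \<theta>G g2 \<and> \<theta>H h1 then cG \<otimes>\<^bsub>G\<^esub> (g1 \<otimes>\<^bsub>G\<^esub> g2) else g1 \<otimes>\<^bsub>G\<^esub> g2)
                   (h1 \<otimes>\<^bsub>H\<^esub> h2)),
       one = ftp_elem G H cG cH \<one>\<^bsub>G\<^esub> \<one>\<^bsub>H\<^esub> \<rparr>"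

definition ftp_top :: "('a, 'm) monoid_scheme \<Rightarrow> ('b, 'n) monoid_scheme \<Rightarrow> 'a \<Rightarrow> 'b
    \<Rightarrow> 'a topology \<Rightarrow> 'b topology \<Rightarrow> ('a \<times> 'b) set topology" where
  "ftp_top G H cG cH TG TH =
     quotient_topology (prod_topology TG TH) (\<lambda>(g, h). ftp_elem G H cG cH g h)
       ((carrier G \<times> carrier H) // ftp_rel G H cG cH)"

definition ftp_grading :: "('a \<Rightarrow> bool) \<Rightarrow> ('b \<Rightarrow> bool) \<Rightarrow> ('a \<times> 'b) set \<Rightarrow> bool" where
  "ftp_grading \<theta>G \<theta>H x = (let (g, h) = (SOME p. p \<in> x) in \<theta>G g \<noteq> \<theta>H h)"

definition bos :: "('b, 'n) monoid_scheme \<Rightarrow> 'b \<Rightarrow> 'b set monoid" where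
  "bos H cH = H Mod {\<one>\<^bsub>H\<^esub>, cH}"

definition bos_top :: "('b, 'n) monoid_scheme \<Rightarrow> 'b \<Rightarrow> 'b topology \<Rightarrow> 'b set topology" where
  "bos_top H cH TH = quotient_topology TH (\<lambda>h. {\<one>\<^bsub>H\<^esub>, cH} #>\<^bsub>H\<^esub> h) (carrier (bos H cH))"

definition ftp_incl :: "('a, 'm) monoid_scheme \<Rightarrow> ('b, 'n) monoid_scheme \<Rightarrow> 'a \<Rightarrow> 'b
    \<Rightarrow> 'a \<Rightarrow> ('a \<times> 'b) set" where
  "ftp_incl G H cG cH g = ftp_elem G H cG cH g \<one>\<^bsub>H\<^esub>"

definition ftp_proj :: "('b, 'n) monoid_scheme \<Rightarrow> 'b \<Rightarrow> ('a \<times> 'b) set \<Rightarrow> 'b set" where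
  "ftp_proj H cH x = {\<one>\<^bsub>H\<^esub>, cH} #>\<^bsub>H\<^esub> snd (SOME p. p \<in> x)"

definition short_exact_top ::
  "('a, 'm) monoid_scheme \<Rightarrow> 'a topology \<Rightarrow> ('b, 'n) monoid_scheme \<Rightarrow> 'b topology
   \<Rightarrow> ('c, 'k) monoid_scheme \<Rightarrow> 'c topology \<Rightarrow> ('a \<Rightarrow> 'b) \<Rightarrow> ('b \<Rightarrow> 'c) \<Rightarrow> bool" where
  "short_exact_top A TA B TB C TC i p \<longleftrightarrow>
     topgroup A TA \<and> topgroup B TB \<and> topgroup C TC
     \<and> i \<in> hom A B \<and> p \<in> hom B C
     \<and> continuous_map TA TB i \<and> continuous_map TB TC p
     \<and> inj_on i (carrier A)
     \<and> i ` carrier A = kernel B C p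
     \<and> p ` carrier B = carrier C"

end

theory Submission
  imports Defs
begin

(* The classes g \<otimes> h are the orbits of the involution (g, h) \<mapsto> ((-1)^F g, (-1)^F h) of G \<times> H, which is
   compatible with the twisted multiplication, so G \<otimes> H is a group. A quotient map whose fibres
   are the orbits of a family of homeomorphisms is open, and a product of open quotient maps is
   again a quotient map; hence the continuous multiplication and inversion of G \<times> H descend to
   G \<otimes> H, and in the same way to H_b = H / {1, (-1)^F}. Exactness is a computation on
   representatives: g \<otimes> h lies in the kernel of \<pi> iff h \<in> {1, (-1)^F}, g \<otimes> (-1)^F = (-1)^F g \<otimes> 1,
   and i is injective because (-1)^F_H \<noteq> 1. On even parts the kernel is the preimage of
   (G \<otimes> H)_ev under i, which is G_ev, and \<pi> stays surjective because an odd element of G can be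
   paired with every odd h. *)

section \<open>Quotient topologies\<close>

lemma istopology_quotient_topology:
  "istopology (\<lambda>S. S \<subseteq> Y \<and> openin Z {x \<in> topspace Z. f x \<in> S})"
  unfolding istopology_def
proof (intro conjI allI impI)
  fix S T
  assume S: "S \<subseteq> Y \<and> openin Z {x \<in> topspace Z. f x \<in> S}"
    and T: "T \<subseteq> Y \<and> openin Z {x \<in> topspace Z. f x \<in> T}"
  have "{x \<in> topspace Z. f x \<in> S \<inter> T} = {x \<in> topspace Z. f x \<in> S} \<inter> {x \<in> topspace Z. f x \<in> T}"
    by blast
  with S T show "S \<inter> T \<subseteq> Y" "openin Z {x \<in> topspace Z. f x \<in> S \<inter> T}"
    by auto
next
  fix K
  assume K: "\<forall>S\<in>K. S \<subseteq> Y \<and> openin Z {x \<in> topspace Z. f x \<in> S}"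
  have "{x \<in> topspace Z. f x \<in> \<Union>K} = (\<Union>S\<in>K. {x \<in> topspace Z. f x \<in> S})"
    by blast
  with K show "\<Union>K \<subseteq> Y" "openin Z {x \<in> topspace Z. f x \<in> \<Union>K}"
    by auto
qed

lemma openin_quotient_topology:
  "openin (quotient_topology Z f Y) S \<longleftrightarrow> S \<subseteq> Y \<and> openin Z {x \<in> topspace Z. f x \<in> S}"
  unfolding quotient_topology_def topology_inverse'[OF istopology_quotient_topology] by simp

lemma topspace_quotient_topology:
  assumes "f ` topspace Z \<subseteq> Y"
  shows "topspace (quotient_topology Z f Y) = Y"
proof
  show "topspace (quotient_topology Z f Y) \<subseteq> Y"
    using openin_quotient_topology[of Z f Y "topspace (quotient_topology Z f Y)"] by simp
  have "{x \<in> topspace Z. f x \<in> Y} = topspace Z"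
    using assms by auto
  then have "openin (quotient_topology Z f Y) Y"
    by (simp add: openin_quotient_topology)
  then show "Y \<subseteq> topspace (quotient_topology Z f Y)"
    by (rule openin_subset)
qed

lemma quotient_map_quotient_topology:
  assumes "f ` topspace Z = Y"
  shows "quotient_map Z (quotient_topology Z f Y) f"
  unfolding quotient_map_def
  using assms by (simp add: topspace_quotient_topology openin_quotient_topology)

lemma open_map_quotient_topology:
  assumes img: "f ` topspace Z = Y"
    and cont: "\<And>\<phi>. \<phi> \<in> F \<Longrightarrow> continuous_map Z Z \<phi>"
    and fibres: "\<And>x y. x \<in> topspace Z \<Longrightarrow> y \<in> topspace Z \<Longrightarrow> f x = f y \<longleftrightarrow> (\<exists>\<phi>\<in>F. \<phi> x = y)"
  shows "open_map Z (quotient_topology Z f Y) f"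
  unfolding open_map_def openin_quotient_topology
proof (intro allI impI conjI)
  fix U
  assume U: "openin Z U"
  then show "f ` U \<subseteq> Y"
    using img openin_subset[of Z U] by auto
  have "{x \<in> topspace Z. f x \<in> f ` U} = (\<Union>\<phi>\<in>F. {x \<in> topspace Z. \<phi> x \<in> U})"
  proof (intro equalityI subsetI)
    fix x
    assume "x \<in> {x \<in> topspace Z. f x \<in> f ` U}"
    then obtain u where "x \<in> topspace Z" "u \<in> U" "f x = f u"
      by auto
    with fibres[of x u] show "x \<in> (\<Union>\<phi>\<in>F. {x \<in> topspace Z. \<phi> x \<in> U})"
      using openin_subset[OF U] by auto
  next
    fix x
    assume "x \<in> (\<Union>\<phi>\<in>F. {x \<in> topspace Z. \<phi> x \<in> U})"
    then obtain \<phi> where "\<phi> \<in> F" "x \<in> topspace Z" "\<phi> x \<in> U"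
      by auto
    with fibres[of x "\<phi> x"] show "x \<in> {x \<in> topspace Z. f x \<in> f ` U}"
      using openin_subset[OF U] by (auto intro: image_eqI[of _ _ "\<phi> x"])
  qed
  then show "openin Z {x \<in> topspace Z. f x \<in> f ` U}"
    by (auto intro!: openin_Union openin_continuous_map_preimage[OF cont U])
qed

lemma open_map_prod_top:
  assumes f: "open_map Y1 Y1' f" and g: "open_map Y2 Y2' g"
  shows "open_map (prod_topology Y1 Y2) (prod_topology Y1' Y2') (\<lambda>(x, y). (f x, g y))"
  unfolding open_map_def
proof (intro allI impI)
  fix W
  assume W: "openin (prod_topology Y1 Y2) W"
  show "openin (prod_topology Y1' Y2') ((\<lambda>(x, y). (f x, g y)) ` W)"
    unfolding openin_prod_topology_alt
  proof (intro allI impI)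
    fix a b
    assume "(a, b) \<in> (\<lambda>(x, y). (f x, g y)) ` W"
    then obtain x y where xy: "(x, y) \<in> W" "a = f x" "b = g y"
      by auto
    then obtain U V where UV: "openin Y1 U" "openin Y2 V" "x \<in> U" "y \<in> V" "U \<times> V \<subseteq> W"
      using W unfolding openin_prod_topology_alt by metis
    have "openin Y1' (f ` U)" "openin Y2' (g ` V)"
      using f g UV unfolding open_map_def by auto
    moreover have "f ` U \<times> g ` V \<subseteq> (\<lambda>(x, y). (f x, g y)) ` W"
      using UV(5) by force
    ultimately show "\<exists>U' V'. openin Y1' U' \<and> openin Y2' V' \<and> a \<in> U' \<and> b \<in> V'
        \<and> U' \<times> V' \<subseteq> (\<lambda>(x, y). (f x, g y)) ` W"
      using xy UV by blast
  qed
qed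

lemma quotient_map_prod_top_open:
  assumes "quotient_map Y1 Y1' f" "open_map Y1 Y1' f" "quotient_map Y2 Y2' g" "open_map Y2 Y2' g"
  shows "quotient_map (prod_topology Y1 Y2) (prod_topology Y1' Y2') (\<lambda>(x, y). (f x, g y))"
proof -
  have "continuous_map (prod_topology Y1 Y2) (prod_topology Y1' Y2') (\<lambda>(x, y). (f x, g y))"
    using quotient_imp_continuous_map[OF assms(1)] quotient_imp_continuous_map[OF assms(3)]
    by (simp add: continuous_map_prod_top)
  moreover have "(\<lambda>(x, y). (f x, g y)) ` topspace (prod_topology Y1 Y2) = topspace (prod_topology Y1' Y2')"
    using quotient_imp_surjective_map[OF assms(1)] quotient_imp_surjective_map[OF assms(3)]
    by (simp add: image_paired_Times)
  ultimately show ?thesis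
    by (simp add: continuous_open_quotient_map open_map_prod_top assms(2,4))
qed

lemma continuous_map_quotient_unop:
  assumes q: "quotient_map Z Q q" and m: "continuous_map Z Z m"
    and eq: "\<And>a. a \<in> topspace Z \<Longrightarrow> M (q a) = q (m a)"
  shows "continuous_map Q Q M"
proof -
  have "continuous_map Z Q (q \<circ> m)"
    using continuous_map_compose[OF m quotient_imp_continuous_map[OF q]] .
  then have "continuous_map Z Q (M \<circ> q)"
    by (rule continuous_map_eq) (simp add: eq)
  then show ?thesis
    using continuous_compose_quotient_map[OF q] by blast
qed

text \<open>Openness of q is needed because a product of quotient maps need not be a quotient map.\<close>

lemma continuous_map_quotient_binop:
  assumes q: "quotient_map Z Q q" and o: "open_map Z Q q"
    and m: "continuous_map (prod_topology Z Z) Z (\<lambda>(a, b). m a b)"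
    and eq: "\<And>a b. a \<in> topspace Z \<Longrightarrow> b \<in> topspace Z \<Longrightarrow> M (q a) (q b) = q (m a b)"
  shows "continuous_map (prod_topology Q Q) Q (\<lambda>(x, y). M x y)"
proof -
  have qq: "quotient_map (prod_topology Z Z) (prod_topology Q Q) (\<lambda>(a, b). (q a, q b))"
    by (rule quotient_map_prod_top_open[OF q o q o])
  have "continuous_map (prod_topology Z Z) Q (q \<circ> (\<lambda>(a, b). m a b))"
    using continuous_map_compose[OF m quotient_imp_continuous_map[OF q]] .
  then have "continuous_map (prod_topology Z Z) Q ((\<lambda>(x, y). M x y) \<circ> (\<lambda>(a, b). (q a, q b)))"
    by (rule continuous_map_eq) (auto simp: eq)
  then show ?thesis
    using continuous_compose_quotient_map[OF qq] by blast
qed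

lemma continuous_map_if_discrete:
  assumes P: "continuous_map Z (discrete_topology UNIV) P"
    and f: "continuous_map Z Y f" and g: "continuous_map Z Y g"
  shows "continuous_map Z Y (\<lambda>x. if P x then f x else g x)"
  unfolding continuous_map_def
proof (intro conjI allI impI)
  show "(\<lambda>x. if P x then f x else g x) \<in> topspace Z \<rightarrow> topspace Y"
    using f g by (auto simp: continuous_map_def)
next
  fix U
  assume U: "openin Y U"
  have "openin Z {x \<in> topspace Z. P x \<in> {True}}" "openin Z {x \<in> topspace Z. P x \<in> {False}}"
    by (rule openin_continuous_map_preimage[OF P], simp)+
  moreover have "openin Z {x \<in> topspace Z. f x \<in> U}" "openin Z {x \<in> topspace Z. g x \<in> U}"
    using f g U by (simp_all add: openin_continuous_map_preimage)
  moreover have "{x \<in> topspace Z. (if P x then f x else g x) \<in> U} =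
      {x \<in> topspace Z. P x \<in> {True}} \<inter> {x \<in> topspace Z. f x \<in> U}
      \<union> {x \<in> topspace Z. P x \<in> {False}} \<inter> {x \<in> topspace Z. g x \<in> U}"
    by auto
  ultimately show "openin Z {x \<in> topspace Z. (if P x then f x else g x) \<in> U}"
    by auto
qed

lemma continuous_map_conj_discrete:
  assumes "continuous_map Z (discrete_topology UNIV) P" "continuous_map Z (discrete_topology UNIV) Q"
  shows "continuous_map Z (discrete_topology UNIV) (\<lambda>x. P x \<and> Q x)"
proof -
  have "continuous_map Z (discrete_topology UNIV) (\<lambda>x. if P x then Q x else False)"
    by (rule continuous_map_if_discrete[OF assms]) simp
  then show ?thesis
    by (rule continuous_map_eq) auto
qed

section \<open>Topological groups\<close>

lemma continuous_map_topgroup_mult: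
  assumes "topgroup G T" "continuous_map Z T f" "continuous_map Z T g"
  shows "continuous_map Z T (\<lambda>z. f z \<otimes>\<^bsub>G\<^esub> g z)"
proof -
  have "continuous_map Z T ((\<lambda>(x, y). x \<otimes>\<^bsub>G\<^esub> y) \<circ> (\<lambda>z. (f z, g z)))"
    using assms unfolding topgroup_def
    by (intro continuous_map_compose[of _ "prod_topology T T"]) (simp_all add: continuous_map_paired)
  then show ?thesis
    by (simp add: o_def)
qed

lemma continuous_map_topgroup_inv:
  assumes "topgroup G T" "continuous_map Z T f"
  shows "continuous_map Z T (\<lambda>z. inv\<^bsub>G\<^esub> f z)"
  using continuous_map_compose[OF assms(2), of T "\<lambda>x. inv\<^bsub>G\<^esub> x"] assms(1)
  unfolding topgroup_def by (simp add: o_def)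

lemma continuous_map_topgroup_translation:
  assumes "topgroup G T" "a \<in> carrier G"
  shows "continuous_map T T (\<lambda>x. a \<otimes>\<^bsub>G\<^esub> x)"
  using assms by (intro continuous_map_topgroup_mult) (auto simp: topgroup_def)

lemma topgroup_subgroup:
  assumes tg: "topgroup G T" and sg: "subgroup S G"
  shows "topgroup (G\<lparr>carrier := S\<rparr>) (subtopology T S)"
proof -
  have g: "group G" and te: "topspace T = carrier G"
    and m: "continuous_map (prod_topology T T) T (\<lambda>(x, y). x \<otimes>\<^bsub>G\<^esub> y)"
    and i: "continuous_map T T (\<lambda>x. inv\<^bsub>G\<^esub> x)"
    using tg unfolding topgroup_def by auto
  have "continuous_map (subtopology (prod_topology T T) (S \<times> S)) (subtopology T S)
      (\<lambda>(x, y). x \<otimes>\<^bsub>G\<^esub> y)"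
    by (rule continuous_map_into_subtopology[OF continuous_map_from_subtopology[OF m]])
       (auto simp: te subgroup.m_closed[OF sg])
  moreover have "continuous_map (subtopology T S) (subtopology T S) (\<lambda>x. inv\<^bsub>G\<^esub> x)"
    by (rule continuous_map_into_subtopology[OF continuous_map_from_subtopology[OF i]])
       (auto simp: te subgroup.m_inv_closed[OF sg])
  then have "continuous_map (subtopology T S) (subtopology T S) (\<lambda>x. inv\<^bsub>G\<lparr>carrier := S\<rparr>\<^esub> x)"
    by (rule continuous_map_eq) (auto simp: group.m_inv_consistent[OF g sg])
  ultimately show ?thesis
    unfolding topgroup_def
    using group.subgroup_imp_group[OF g sg] te subgroup.subset[OF sg]
    by (auto simp: subtopology_Times)
qed

lemma (in group) rcos_eq_iff:
  assumes "subgroup N G" "x \<in> carrier G" "y \<in> carrier G"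
  shows "N #> x = N #> y \<longleftrightarrow> (\<exists>n\<in>N. n \<otimes> x = y)"
proof
  assume "N #> x = N #> y"
  then have "y \<in> N #> x"
    using assms by (simp add: rcos_self)
  then show "\<exists>n\<in>N. n \<otimes> x = y"
    by (auto simp: r_coset_def)
next
  assume "\<exists>n\<in>N. n \<otimes> x = y"
  then have "y \<in> N #> x"
    by (auto simp: r_coset_def)
  then show "N #> x = N #> y"
    using assms(2,1) by (rule repr_independence)
qed

lemma open_map_rcos:
  fixes G (structure)
  assumes tg: "topgroup G T" and N: "subgroup N G"
  shows "open_map T (quotient_topology T (\<lambda>x. N #> x) (carrier (G Mod N))) (\<lambda>x. N #> x)"
proof (rule open_map_quotient_topology[where F = "(\<lambda>n x. n \<otimes> x) ` N"])
  have te: "topspace T = carrier G" and g: "group G"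
    using tg by (simp_all add: topgroup_def)
  then show "(\<lambda>x. N #> x) ` topspace T = carrier (G Mod N)"
    by (simp add: carrier_FactGroup)
  show "continuous_map T T \<phi>" if "\<phi> \<in> (\<lambda>n x. n \<otimes> x) ` N" for \<phi>
    using that subgroup.subset[OF N] continuous_map_topgroup_translation[OF tg] by auto
  show "N #> x = N #> y \<longleftrightarrow> (\<exists>\<phi>\<in>(\<lambda>n x. n \<otimes> x) ` N. \<phi> x = y)"
    if "x \<in> topspace T" "y \<in> topspace T" for x y
    using group.rcos_eq_iff[OF g N, of x y] that te by auto
qed

lemma topgroup_FactGroup:
  fixes G (structure)
  assumes tg: "topgroup G T" and N: "N \<lhd> G"
  shows "topgroup (G Mod N) (quotient_topology T (\<lambda>x. N #> x) (carrier (G Mod N)))"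
    (is "topgroup _ ?Q")
proof -
  interpret normal N G by (rule N)
  have te: "topspace T = carrier G"
    using tg by (simp add: topgroup_def)
  have img: "(\<lambda>x. N #> x) ` topspace T = carrier (G Mod N)"
    by (simp add: te carrier_FactGroup)
  have q: "quotient_map T ?Q (\<lambda>x. N #> x)"
    by (rule quotient_map_quotient_topology[OF img])
  have "continuous_map (prod_topology T T) T (\<lambda>(x, y). x \<otimes> y)"
    using tg by (simp add: topgroup_def)
  then have mult: "continuous_map (prod_topology ?Q ?Q) ?Q (\<lambda>(A, B). A \<otimes>\<^bsub>G Mod N\<^esub> B)"
    by (rule continuous_map_quotient_binop[OF q open_map_rcos[OF tg subgroup_axioms]])
      (simp add: te rcos_sum)
  have "continuous_map T T (\<lambda>x. inv x)"
    using tg by (simp add: topgroup_def)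
  then have inv: "continuous_map ?Q ?Q (\<lambda>A. inv\<^bsub>G Mod N\<^esub> A)"
  proof (rule continuous_map_quotient_unop[OF q])
    fix a
    assume "a \<in> topspace T"
    then have "a \<in> carrier G" "N #> a \<in> carrier (G Mod N)"
      by (auto simp: te carrier_FactGroup)
    then show "inv\<^bsub>G Mod N\<^esub> (N #> a) = N #> inv a"
      by (simp add: inv_FactGroup rcos_inv)
  qed
  show ?thesis
    unfolding topgroup_def
    using factorgroup_is_group topspace_quotient_topology[of "\<lambda>x. N #> x" T] img mult inv
    by simp
qed

lemma (in group_hom) subgroup_vimage:
  assumes "subgroup K H"
  shows "subgroup {x \<in> carrier G. h x \<in> K} G"
proof (rule G.subgroupI)
  have "\<one>\<^bsub>G\<^esub> \<in> {x \<in> carrier G. h x \<in> K}"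
    using assms by (simp add: subgroup.one_closed)
  then show "{x \<in> carrier G. h x \<in> K} \<noteq> {}"
    by blast
qed (use assms in \<open>auto simp: subgroup.m_closed subgroup.m_inv_closed\<close>)

lemma short_exact_top_restrict:
  assumes ex: "short_exact_top A TA B TB C TC i p"
    and B': "subgroup B' B" and A': "A' = {a \<in> carrier A. i a \<in> B'}"
    and onto: "p ` B' = carrier C"
  shows "short_exact_top (A\<lparr>carrier := A'\<rparr>) (subtopology TA A') (B\<lparr>carrier := B'\<rparr>) (subtopology TB B')
           C TC i p"
proof -
  have tA: "topgroup A TA" and tB: "topgroup B TB" and i: "i \<in> hom A B" and p: "p \<in> hom B C"
    and ci: "continuous_map TA TB i" and cp: "continuous_map TB TC p"
    and kernel: "i ` carrier A = kernel B C p"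
    using ex by (simp_all add: short_exact_top_def)
  have "group_hom A B i"
    using tA tB i by (simp add: group_hom_def group_hom_axioms_def topgroup_def)
  then have "subgroup A' A"
    using B' A' by (simp add: group_hom.subgroup_vimage)
  moreover have "i \<in> hom (A\<lparr>carrier := A'\<rparr>) (B\<lparr>carrier := B'\<rparr>)" "p \<in> hom (B\<lparr>carrier := B'\<rparr>) C"
    using i p A' subgroup.subset[OF B'] by (auto simp: hom_def subset_iff)
  moreover have "continuous_map (subtopology TA A') (subtopology TB B') i"
    using ci A' continuous_map_image_subset_topspace[OF ci]
    by (intro continuous_map_into_subtopology continuous_map_from_subtopology) auto
  moreover have "kernel (B\<lparr>carrier := B'\<rparr>) C p = kernel B C p \<inter> B'"
    using subgroup.subset[OF B'] by (auto simp: kernel_def)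
  then have "i ` A' = kernel (B\<lparr>carrier := B'\<rparr>) C p"
    using kernel A' by auto
  moreover have "inj_on i A'"
    using ex A' by (auto simp: short_exact_top_def intro: inj_on_subset)
  ultimately show ?thesis
    using ex tA tB B' onto unfolding short_exact_top_def
    by (auto intro: topgroup_subgroup continuous_map_from_subtopology)
qed

section \<open>Fermionic groups\<close>

locale fermionic_group =
  fixes G :: "('a, 'm) monoid_scheme" (structure) and T :: "'a topology" and c :: 'a
    and \<theta> :: "'a \<Rightarrow> bool"
  assumes fermionic: "fermionic G T c \<theta>"
begin

sublocale group G
  using fermionic by (simp add: fermionic_def topgroup_def)

lemma topgroup: "topgroup G T"
  using fermionic by (simp add: fermionic_def)

lemma topspace_eq [simp]: "topspace T = carrier G"
  using topgroup by (simp add: topgroup_def)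

lemma continuous_grading: "continuous_map T (discrete_topology UNIV) \<theta>"
  using fermionic by (simp add: fermionic_def)

lemma parity_closed [simp]: "c \<in> carrier G"
  using fermionic by (simp add: fermionic_def)

lemma parity_square [simp]: "c \<otimes> c = \<one>"
  using fermionic by (simp add: fermionic_def)

lemma parity_central: "x \<in> carrier G \<Longrightarrow> x \<otimes> c = c \<otimes> x"
  using fermionic by (simp add: fermionic_def)

lemma parity_cancel [simp]: "x \<in> carrier G \<Longrightarrow> c \<otimes> (c \<otimes> x) = x"
  by (simp add: m_assoc[symmetric])

(* Not a simp rule: for x = c it rewrites a term to itself. *)
lemma parity_left_commute: "x \<in> carrier G \<Longrightarrow> y \<in> carrier G \<Longrightarrow> x \<otimes> (c \<otimes> y) = c \<otimes> (x \<otimes> y)"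
  by (simp add: m_assoc[symmetric] parity_central)

lemma grading_mult [simp]: "x \<in> carrier G \<Longrightarrow> y \<in> carrier G \<Longrightarrow> \<theta> (x \<otimes> y) = (\<theta> x \<noteq> \<theta> y)"
  using fermionic by (simp add: fermionic_def)

lemma grading_parity [simp]: "\<not> \<theta> c"
  using fermionic by (simp add: fermionic_def)

lemma grading_one [simp]: "\<not> \<theta> \<one>"
  using grading_mult[of \<one> \<one>] by simp

lemma grading_inv [simp]: "x \<in> carrier G \<Longrightarrow> \<theta> (inv x) = \<theta> x"
  using grading_mult[of x "inv x"] by simp

lemma inv_parity [simp]: "inv c = c"
  by (rule inv_equality) simp_all

lemma parity_subgroup_normal: "{\<one>, c} \<lhd> G"
proof -
  have "subgroup {\<one>, c} G"
    by (rule subgroupI) auto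
  then show ?thesis
    unfolding normal_inv_iff by (auto simp: parity_central m_assoc)
qed

lemma parity_coset: "x \<in> carrier G \<Longrightarrow> {\<one>, c} #> x = {x, c \<otimes> x}"
  by (auto simp: r_coset_def)

lemma parity_coset_parity [simp]: "x \<in> carrier G \<Longrightarrow> {\<one>, c} #> (c \<otimes> x) = {\<one>, c} #> x"
  by (auto simp: parity_coset)

lemma topgroup_bos: "topgroup (bos G c) (bos_top G c T)"
  unfolding bos_top_def bos_def
  by (rule topgroup_FactGroup[OF topgroup parity_subgroup_normal])

end

section \<open>The fermionic tensor product\<close>

locale fermionic_pair = G: fermionic_group G TG cG \<theta>G + H: fermionic_group H TH cH \<theta>H
  for G :: "('a, 'm) monoid_scheme" and TG cG \<theta>G
    and H :: "('b, 'n) monoid_scheme" and TH cH \<theta>H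
begin

abbreviation tensor where "tensor \<equiv> ftp G H cG cH \<theta>G \<theta>H"
abbreviation elem where "elem g h \<equiv> ftp_elem G H cG cH g h"
abbreviation incl where "incl \<equiv> ftp_incl G H cG cH"
abbreviation proj where "proj \<equiv> ftp_proj H cH"
abbreviation tensor_even where "tensor_even \<equiv> {x \<in> carrier tensor. \<not> ftp_grading \<theta>G \<theta>H x}"

definition twisted_mult :: "'a \<Rightarrow> 'b \<Rightarrow> 'a \<Rightarrow> 'b \<Rightarrow> 'a" where
  "twisted_mult g1 h1 g2 h2 =
     (if \<theta>G g2 \<and> \<theta>H h1 then cG \<otimes>\<^bsub>G\<^esub> (g1 \<otimes>\<^bsub>G\<^esub> g2) else g1 \<otimes>\<^bsub>G\<^esub> g2)"

lemma twisted_mult_closed [simp]: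
  "g1 \<in> carrier G \<Longrightarrow> g2 \<in> carrier G \<Longrightarrow> twisted_mult g1 h1 g2 h2 \<in> carrier G"
  by (simp add: twisted_mult_def)

lemma twisted_mult_parity_left:
  "g1 \<in> carrier G \<Longrightarrow> h1 \<in> carrier H \<Longrightarrow> g2 \<in> carrier G \<Longrightarrow>
    twisted_mult (cG \<otimes>\<^bsub>G\<^esub> g1) (cH \<otimes>\<^bsub>H\<^esub> h1) g2 h2 = cG \<otimes>\<^bsub>G\<^esub> twisted_mult g1 h1 g2 h2"
  by (simp add: twisted_mult_def G.m_assoc)

lemma twisted_mult_parity_right:
  "g1 \<in> carrier G \<Longrightarrow> g2 \<in> carrier G \<Longrightarrow> h2 \<in> carrier H \<Longrightarrow>
    twisted_mult g1 h1 (cG \<otimes>\<^bsub>G\<^esub> g2) (cH \<otimes>\<^bsub>H\<^esub> h2) = cG \<otimes>\<^bsub>G\<^esub> twisted_mult g1 h1 g2 h2"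
  by (simp add: twisted_mult_def G.m_assoc G.parity_left_commute[of g1])

lemma twisted_mult_assoc:
  assumes "g1 \<in> carrier G" "h1 \<in> carrier H" "g2 \<in> carrier G" "h2 \<in> carrier H" "g3 \<in> carrier G"
  shows "twisted_mult (twisted_mult g1 h1 g2 h2) (h1 \<otimes>\<^bsub>H\<^esub> h2) g3 h3
       = twisted_mult g1 h1 (twisted_mult g2 h2 g3 h3) (h2 \<otimes>\<^bsub>H\<^esub> h3)"
  using assms by (cases "\<theta>G g2"; cases "\<theta>G g3"; cases "\<theta>H h1"; cases "\<theta>H h2")
    (simp_all add: twisted_mult_def G.m_assoc G.parity_left_commute[of g1])

definition twisted_inv :: "'a \<Rightarrow> 'b \<Rightarrow> 'a" where
  "twisted_inv g h = (if \<theta>G g \<and> \<theta>H h then cG \<otimes>\<^bsub>G\<^esub> inv\<^bsub>G\<^esub> g else inv\<^bsub>G\<^esub> g)"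

lemma twisted_inv_closed [simp]: "g \<in> carrier G \<Longrightarrow> twisted_inv g h \<in> carrier G"
  by (simp add: twisted_inv_def)

lemma twisted_mult_inv:
  assumes "g \<in> carrier G" "h \<in> carrier H"
  shows "twisted_mult (twisted_inv g h) (inv\<^bsub>H\<^esub> h) g h = \<one>\<^bsub>G\<^esub>"
  using assms by (cases "\<theta>G g \<and> \<theta>H h") (auto simp: twisted_inv_def twisted_mult_def G.m_assoc)

lemma ftp_elem_eq:
  "g \<in> carrier G \<Longrightarrow> h \<in> carrier H \<Longrightarrow> elem g h = {(g, h), (cG \<otimes>\<^bsub>G\<^esub> g, cH \<otimes>\<^bsub>H\<^esub> h)}"
  unfolding ftp_elem_def ftp_rel_def by auto

lemma carrier_ftp: "carrier tensor = (\<lambda>(g, h). elem g h) ` (carrier G \<times> carrier H)"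
  unfolding ftp_def quotient_def ftp_elem_def by auto

lemma ftp_elem_closed [simp]: "g \<in> carrier G \<Longrightarrow> h \<in> carrier H \<Longrightarrow> elem g h \<in> carrier tensor"
  by (auto simp: carrier_ftp)

lemma ftp_carrierE:
  assumes "x \<in> carrier tensor"
  obtains g h where "g \<in> carrier G" "h \<in> carrier H" "x = elem g h"
  using assms by (auto simp: carrier_ftp)

lemma ftp_elem_parity [simp]:
  "g \<in> carrier G \<Longrightarrow> h \<in> carrier H \<Longrightarrow> elem (cG \<otimes>\<^bsub>G\<^esub> g) (cH \<otimes>\<^bsub>H\<^esub> h) = elem g h"
  by (simp add: ftp_elem_eq insert_commute)

lemma ftp_elem_eq_iff:
  assumes "g \<in> carrier G" "h \<in> carrier H" "g' \<in> carrier G" "h' \<in> carrier H"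
  shows "elem g h = elem g' h' \<longleftrightarrow> (g', h') = (g, h) \<or> (g', h') = (cG \<otimes>\<^bsub>G\<^esub> g, cH \<otimes>\<^bsub>H\<^esub> h)"
proof
  assume "elem g h = elem g' h'"
  moreover have "(g', h') \<in> elem g' h'"
    using assms(3,4) by (simp add: ftp_elem_eq)
  ultimately have "(g', h') \<in> elem g h"
    by simp
  then show "(g', h') = (g, h) \<or> (g', h') = (cG \<otimes>\<^bsub>G\<^esub> g, cH \<otimes>\<^bsub>H\<^esub> h)"
    using assms by (simp add: ftp_elem_eq)
qed (use assms in auto)

lemma some_ftp_elem_cases:
  assumes "g \<in> carrier G" "h \<in> carrier H"
  obtains "(SOME p. p \<in> elem g h) = (g, h)" | "(SOME p. p \<in> elem g h) = (cG \<otimes>\<^bsub>G\<^esub> g, cH \<otimes>\<^bsub>H\<^esub> h)"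
  using someI[of "\<lambda>p. p \<in> elem g h" "(g, h)"] assms by (auto simp: ftp_elem_eq)

lemma ftp_elem_twisted_mult_cong:
  assumes "g1 \<in> carrier G" "h1 \<in> carrier H" "g2 \<in> carrier G" "h2 \<in> carrier H"
    and "(g1', h1') \<in> elem g1 h1" "(g2', h2') \<in> elem g2 h2"
  shows "elem (twisted_mult g1' h1' g2' h2') (h1' \<otimes>\<^bsub>H\<^esub> h2') = elem (twisted_mult g1 h1 g2 h2) (h1 \<otimes>\<^bsub>H\<^esub> h2)"
proof -
  have "(g1', h1') = (g1, h1) \<or> (g1', h1') = (cG \<otimes>\<^bsub>G\<^esub> g1, cH \<otimes>\<^bsub>H\<^esub> h1)"
    "(g2', h2') = (g2, h2) \<or> (g2', h2') = (cG \<otimes>\<^bsub>G\<^esub> g2, cH \<otimes>\<^bsub>H\<^esub> h2)"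
    using assms by (simp_all add: ftp_elem_eq)
  then show ?thesis
    using assms(1-4)
    by (auto simp: twisted_mult_parity_left twisted_mult_parity_right H.m_assoc
        H.parity_left_commute[of h1])
qed

lemma mult_ftp_elem:
  assumes "g1 \<in> carrier G" "h1 \<in> carrier H" "g2 \<in> carrier G" "h2 \<in> carrier H"
  shows "elem g1 h1 \<otimes>\<^bsub>tensor\<^esub> elem g2 h2 = elem (twisted_mult g1 h1 g2 h2) (h1 \<otimes>\<^bsub>H\<^esub> h2)"
proof -
  define p where "p = (SOME p. p \<in> elem g1 h1)"
  define q where "q = (SOME q. q \<in> elem g2 h2)"
  have "(g1, h1) \<in> elem g1 h1" "(g2, h2) \<in> elem g2 h2"
    using assms by (simp_all add: ftp_elem_eq)
  then have "p \<in> elem g1 h1" "q \<in> elem g2 h2"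
    unfolding p_def q_def by (auto intro: someI)
  moreover have "elem g1 h1 \<otimes>\<^bsub>tensor\<^esub> elem g2 h2
      = elem (twisted_mult (fst p) (snd p) (fst q) (snd q)) (snd p \<otimes>\<^bsub>H\<^esub> snd q)"
    by (simp add: ftp_def twisted_mult_def p_def q_def split_def Let_def)
  ultimately show ?thesis
    using ftp_elem_twisted_mult_cong[OF assms] by (metis prod.collapse)
qed

lemma one_ftp: "\<one>\<^bsub>tensor\<^esub> = elem \<one>\<^bsub>G\<^esub> \<one>\<^bsub>H\<^esub>"
  by (simp add: ftp_def)

lemma group_ftp: "group tensor"
proof (rule groupI)
  fix x y
  assume "x \<in> carrier tensor" "y \<in> carrier tensor"
  then obtain g1 h1 g2 h2 where "g1 \<in> carrier G" "h1 \<in> carrier H" "x = elem g1 h1"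
    "g2 \<in> carrier G" "h2 \<in> carrier H" "y = elem g2 h2"
    by (metis ftp_carrierE)
  then show "x \<otimes>\<^bsub>tensor\<^esub> y \<in> carrier tensor"
    by (simp add: mult_ftp_elem)
next
  show "\<one>\<^bsub>tensor\<^esub> \<in> carrier tensor"
    by (simp add: one_ftp)
next
  fix x y z
  assume "x \<in> carrier tensor" "y \<in> carrier tensor" "z \<in> carrier tensor"
  then obtain g1 h1 g2 h2 g3 h3 where gh: "g1 \<in> carrier G" "h1 \<in> carrier H" "x = elem g1 h1"
    "g2 \<in> carrier G" "h2 \<in> carrier H" "y = elem g2 h2"
    "g3 \<in> carrier G" "h3 \<in> carrier H" "z = elem g3 h3"
    by (metis ftp_carrierE)
  then show "x \<otimes>\<^bsub>tensor\<^esub> y \<otimes>\<^bsub>tensor\<^esub> z = x \<otimes>\<^bsub>tensor\<^esub> (y \<otimes>\<^bsub>tensor\<^esub> z)"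
    by (simp add: mult_ftp_elem twisted_mult_assoc H.m_assoc)
next
  fix x
  assume "x \<in> carrier tensor"
  then obtain g h where "g \<in> carrier G" "h \<in> carrier H" "x = elem g h"
    by (rule ftp_carrierE)
  then show "\<one>\<^bsub>tensor\<^esub> \<otimes>\<^bsub>tensor\<^esub> x = x"
    by (simp add: mult_ftp_elem one_ftp twisted_mult_def)
next
  fix x
  assume "x \<in> carrier tensor"
  then obtain g h where gh: "g \<in> carrier G" "h \<in> carrier H" "x = elem g h"
    by (rule ftp_carrierE)
  then have "elem (twisted_inv g h) (inv\<^bsub>H\<^esub> h) \<in> carrier tensor"
    "elem (twisted_inv g h) (inv\<^bsub>H\<^esub> h) \<otimes>\<^bsub>tensor\<^esub> x = \<one>\<^bsub>tensor\<^esub>"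
    by (simp_all add: mult_ftp_elem one_ftp twisted_mult_inv)
  then show "\<exists>y\<in>carrier tensor. y \<otimes>\<^bsub>tensor\<^esub> x = \<one>\<^bsub>tensor\<^esub>"
    by blast
qed

lemma inv_ftp_elem:
  "g \<in> carrier G \<Longrightarrow> h \<in> carrier H \<Longrightarrow>
    inv\<^bsub>tensor\<^esub> (elem g h) = elem (twisted_inv g h) (inv\<^bsub>H\<^esub> h)"
  by (rule group.inv_equality[OF group_ftp]) (simp_all add: mult_ftp_elem one_ftp twisted_mult_inv)

lemma ftp_grading_elem:
  assumes "g \<in> carrier G" "h \<in> carrier H"
  shows "ftp_grading \<theta>G \<theta>H (elem g h) = (\<theta>G g \<noteq> \<theta>H h)"
  by (rule some_ftp_elem_cases[OF assms]) (simp_all add: ftp_grading_def assms)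

lemma ftp_proj_elem:
  assumes "g \<in> carrier G" "h \<in> carrier H"
  shows "proj (elem g h) = {\<one>\<^bsub>H\<^esub>, cH} #>\<^bsub>H\<^esub> h"
  by (rule some_ftp_elem_cases[OF assms]) (simp_all add: ftp_proj_def assms)

lemma ftp_incl_eq: "incl g = elem g \<one>\<^bsub>H\<^esub>"
  by (simp add: ftp_incl_def)

abbreviation TGH where "TGH \<equiv> prod_topology TG TH"
abbreviation tensor_top where "tensor_top \<equiv> ftp_top G H cG cH TG TH"

lemma image_ftp_elem: "(\<lambda>(g, h). elem g h) ` topspace TGH = carrier tensor"
  by (simp add: carrier_ftp)

lemma ftp_top_eq: "tensor_top = quotient_topology TGH (\<lambda>(g, h). elem g h) (carrier tensor)"
  by (simp add: ftp_top_def ftp_def)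

lemma topspace_ftp_top: "topspace tensor_top = carrier tensor"
  unfolding ftp_top_eq using image_ftp_elem by (simp add: topspace_quotient_topology)

lemma quotient_map_ftp_elem: "quotient_map TGH tensor_top (\<lambda>(g, h). elem g h)"
  unfolding ftp_top_eq by (rule quotient_map_quotient_topology[OF image_ftp_elem])

lemma open_map_ftp_elem: "open_map TGH tensor_top (\<lambda>(g, h). elem g h)"
  unfolding ftp_top_eq
proof (rule open_map_quotient_topology[OF image_ftp_elem,
      where F = "{id, \<lambda>(g, h). (cG \<otimes>\<^bsub>G\<^esub> g, cH \<otimes>\<^bsub>H\<^esub> h)}"])
  show "continuous_map TGH TGH \<phi>" if "\<phi> \<in> {id, \<lambda>(g, h). (cG \<otimes>\<^bsub>G\<^esub> g, cH \<otimes>\<^bsub>H\<^esub> h)}" for \<phi>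
    using that continuous_map_topgroup_translation[OF G.topgroup G.parity_closed]
      continuous_map_topgroup_translation[OF H.topgroup H.parity_closed]
    by (auto simp: continuous_map_prod_top)
qed (auto simp: ftp_elem_eq_iff)

lemma continuous_twisted_mult:
  "continuous_map (prod_topology TGH TGH) TG
     (\<lambda>(a, b). twisted_mult (fst a) (snd a) (fst b) (snd b))"
proof -
  let ?Z = "prod_topology TGH TGH"
  note g1 = continuous_map_fst_of[OF continuous_map_fst, unfolded o_def]
    and h1 = continuous_map_snd_of[OF continuous_map_fst, unfolded o_def]
    and g2 = continuous_map_fst_of[OF continuous_map_snd, unfolded o_def]
  have sign: "continuous_map ?Z (discrete_topology UNIV) (\<lambda>z. \<theta>G (fst (snd z)) \<and> \<theta>H (snd (fst z)))"
    by (intro continuous_map_conj_discrete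
        continuous_map_compose[OF g2 G.continuous_grading, unfolded o_def]
        continuous_map_compose[OF h1 H.continuous_grading, unfolded o_def])
  have prod: "continuous_map ?Z TG (\<lambda>z. fst (fst z) \<otimes>\<^bsub>G\<^esub> fst (snd z))"
    by (rule continuous_map_topgroup_mult[OF G.topgroup g1 g2])
  show ?thesis
    unfolding twisted_mult_def case_prod_unfold
    by (intro continuous_map_if_discrete[OF sign] prod continuous_map_topgroup_mult[OF G.topgroup])
      simp
qed

lemma continuous_twisted_inv: "continuous_map TGH TG (\<lambda>z. twisted_inv (fst z) (snd z))"
proof -
  have sign: "continuous_map TGH (discrete_topology UNIV) (\<lambda>z. \<theta>G (fst z) \<and> \<theta>H (snd z))"
    by (intro continuous_map_conj_discrete
        continuous_map_compose[OF continuous_map_fst G.continuous_grading, unfolded o_def]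
        continuous_map_compose[OF continuous_map_snd H.continuous_grading, unfolded o_def])
  have "continuous_map TGH TG (\<lambda>z. inv\<^bsub>G\<^esub> fst z)"
    by (rule continuous_map_topgroup_inv[OF G.topgroup continuous_map_fst])
  then show ?thesis
    unfolding twisted_inv_def
    by (intro continuous_map_if_discrete[OF sign] continuous_map_topgroup_mult[OF G.topgroup]) simp_all
qed

lemma topgroup_ftp: "topgroup tensor tensor_top"
proof -
  have "continuous_map (prod_topology TGH TGH) TGH
      (\<lambda>(a, b). (twisted_mult (fst a) (snd a) (fst b) (snd b), snd a \<otimes>\<^bsub>H\<^esub> snd b))"
    using continuous_twisted_mult continuous_map_topgroup_mult[OF H.topgroup
        continuous_map_snd_of[OF continuous_map_fst, unfolded o_def]
        continuous_map_snd_of[OF continuous_map_snd, unfolded o_def]]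
    by (simp add: continuous_map_paired case_prod_unfold)
  then have mult: "continuous_map (prod_topology tensor_top tensor_top) tensor_top
      (\<lambda>(x, y). x \<otimes>\<^bsub>tensor\<^esub> y)"
    by (rule continuous_map_quotient_binop[OF quotient_map_ftp_elem open_map_ftp_elem])
      (auto simp: mult_ftp_elem)
  have "continuous_map TGH TGH (\<lambda>z. (twisted_inv (fst z) (snd z), inv\<^bsub>H\<^esub> snd z))"
    using continuous_twisted_inv continuous_map_topgroup_inv[OF H.topgroup continuous_map_snd]
    by (simp add: continuous_map_paired)
  then have inv: "continuous_map tensor_top tensor_top (\<lambda>x. inv\<^bsub>tensor\<^esub> x)"
    by (rule continuous_map_quotient_unop[OF quotient_map_ftp_elem])
      (auto simp: inv_ftp_elem)
  show ?thesis
    unfolding topgroup_def using group_ftp topspace_ftp_top mult inv by blast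
qed

lemma ftp_incl_hom: "incl \<in> hom G tensor"
  by (rule homI) (simp_all add: ftp_incl_eq mult_ftp_elem twisted_mult_def)

lemma ftp_proj_hom: "proj \<in> hom tensor (bos H cH)"
proof (rule homI)
  fix x
  assume "x \<in> carrier tensor"
  then show "proj x \<in> carrier (bos H cH)"
    by (rule ftp_carrierE) (auto simp: ftp_proj_elem bos_def carrier_FactGroup)
next
  fix x y
  assume "x \<in> carrier tensor" "y \<in> carrier tensor"
  then obtain g1 h1 g2 h2 where "g1 \<in> carrier G" "h1 \<in> carrier H" "x = elem g1 h1"
    "g2 \<in> carrier G" "h2 \<in> carrier H" "y = elem g2 h2"
    by (metis ftp_carrierE)
  then show "proj (x \<otimes>\<^bsub>tensor\<^esub> y) = proj x \<otimes>\<^bsub>bos H cH\<^esub> proj y"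
    by (simp add: mult_ftp_elem ftp_proj_elem bos_def normal.rcos_sum[OF H.parity_subgroup_normal])
qed

lemma continuous_ftp_incl: "continuous_map TG tensor_top incl"
proof -
  have "continuous_map TG TGH (\<lambda>g. (g, \<one>\<^bsub>H\<^esub>))"
    by (simp add: continuous_map_paired)
  from continuous_map_compose[OF this quotient_imp_continuous_map[OF quotient_map_ftp_elem]]
  show ?thesis
    by (rule continuous_map_eq) (simp add: ftp_incl_eq)
qed

lemma continuous_ftp_proj: "continuous_map tensor_top (bos_top H cH TH) proj"
proof (rule continuous_compose_quotient_map[OF quotient_map_ftp_elem])
  have "continuous_map TH (bos_top H cH TH) (\<lambda>h. {\<one>\<^bsub>H\<^esub>, cH} #>\<^bsub>H\<^esub> h)"
    unfolding bos_top_def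
    by (rule quotient_imp_continuous_map[OF quotient_map_quotient_topology])
      (simp add: bos_def carrier_FactGroup)
  from continuous_map_compose[OF continuous_map_snd this]
  show "continuous_map TGH (bos_top H cH TH) (proj \<circ> (\<lambda>(g, h). elem g h))"
    by (rule continuous_map_eq) (auto simp: ftp_proj_elem)
qed

lemma kernel_ftp_proj: "kernel tensor (bos H cH) proj = incl ` carrier G"
proof (intro equalityI subsetI)
  fix x
  assume x: "x \<in> kernel tensor (bos H cH) proj"
  then obtain g h where gh: "g \<in> carrier G" "h \<in> carrier H" "x = elem g h"
    by (auto simp: kernel_def elim: ftp_carrierE)
  with x have "{h, cH \<otimes>\<^bsub>H\<^esub> h} = {\<one>\<^bsub>H\<^esub>, cH}"
    by (simp add: kernel_def ftp_proj_elem bos_def H.parity_coset)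
  then have "h = \<one>\<^bsub>H\<^esub> \<or> h = cH"
    by (auto simp: doubleton_eq_iff)
  moreover have "elem g cH = incl (cG \<otimes>\<^bsub>G\<^esub> g)"
    using ftp_elem_parity[of "cG \<otimes>\<^bsub>G\<^esub> g" "\<one>\<^bsub>H\<^esub>"] gh by (simp add: ftp_incl_eq)
  ultimately show "x \<in> incl ` carrier G"
    using gh by (auto simp: ftp_incl_eq)
next
  fix x
  assume "x \<in> incl ` carrier G"
  then show "x \<in> kernel tensor (bos H cH) proj"
    by (auto simp: kernel_def ftp_incl_eq ftp_proj_elem bos_def H.parity_coset)
qed

lemma ftp_proj_onto:
  assumes "S \<subseteq> carrier tensor" and "\<And>h. h \<in> carrier H \<Longrightarrow> \<exists>g\<in>carrier G. elem g h \<in> S"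
  shows "proj ` S = carrier (bos H cH)"
proof (intro equalityI subsetI)
  fix y
  assume "y \<in> proj ` S"
  then show "y \<in> carrier (bos H cH)"
    using assms(1) ftp_proj_hom by (auto simp: hom_def)
next
  fix y
  assume "y \<in> carrier (bos H cH)"
  then obtain h where h: "h \<in> carrier H" "y = {\<one>\<^bsub>H\<^esub>, cH} #>\<^bsub>H\<^esub> h"
    by (auto simp: bos_def carrier_FactGroup)
  then obtain g where "g \<in> carrier G" "elem g h \<in> S"
    using assms(2) by blast
  then show "y \<in> proj ` S"
    using h by (force simp: ftp_proj_elem)
qed

lemma inj_ftp_incl:
  assumes "cH \<noteq> \<one>\<^bsub>H\<^esub>"
  shows "inj_on incl (carrier G)"
  using assms by (auto intro!: inj_onI simp: ftp_incl_eq ftp_elem_eq_iff)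

lemma short_exact_ftp:
  assumes "cH \<noteq> \<one>\<^bsub>H\<^esub>"
  shows "short_exact_top G TG tensor tensor_top (bos H cH) (bos_top H cH TH) incl proj"
  unfolding short_exact_top_def
  using ftp_proj_onto[of "carrier tensor"]
  by (intro conjI G.topgroup topgroup_ftp H.topgroup_bos ftp_incl_hom ftp_proj_hom
      continuous_ftp_incl continuous_ftp_proj inj_ftp_incl[OF assms] kernel_ftp_proj[symmetric])
    auto

lemma subgroup_ftp_even: "subgroup tensor_even tensor"
proof (rule group.subgroupI[OF group_ftp])
  have "elem \<one>\<^bsub>G\<^esub> \<one>\<^bsub>H\<^esub> \<in> tensor_even"
    by (simp add: ftp_grading_elem)
  then show "tensor_even \<noteq> {}"
    by blast
next
  fix x
  assume x: "x \<in> tensor_even"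
  then obtain g h where "g \<in> carrier G" "h \<in> carrier H" "x = elem g h"
    by (blast elim: ftp_carrierE)
  with x show "inv\<^bsub>tensor\<^esub> x \<in> tensor_even"
    by (simp add: ftp_grading_elem inv_ftp_elem twisted_inv_def)
next
  fix x y
  assume x: "x \<in> tensor_even"
    and y: "y \<in> tensor_even"
  then obtain g1 h1 g2 h2 where "g1 \<in> carrier G" "h1 \<in> carrier H" "x = elem g1 h1"
    "g2 \<in> carrier G" "h2 \<in> carrier H" "y = elem g2 h2"
    by (metis (no_types, lifting) ftp_carrierE mem_Collect_eq)
  with x y show "x \<otimes>\<^bsub>tensor\<^esub> y \<in> tensor_even"
    by (simp add: ftp_grading_elem mult_ftp_elem twisted_mult_def)
qed auto

lemma ftp_incl_vimage_even: "{g \<in> carrier G. incl g \<in> tensor_even} = {g \<in> carrier G. \<not> \<theta>G g}"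
  by (auto simp: ftp_incl_eq ftp_grading_elem)

lemma ftp_proj_even_onto:
  assumes "\<exists>g\<in>carrier G. \<theta>G g"
  shows "proj ` tensor_even = carrier (bos H cH)"
proof (rule ftp_proj_onto)
  fix h
  assume h: "h \<in> carrier H"
  obtain g where "g \<in> carrier G" "\<theta>G g = \<theta>H h"
    using assms G.grading_one G.one_closed by metis
  then show "\<exists>g\<in>carrier G. elem g h \<in> tensor_even"
    using h by (auto simp: ftp_grading_elem)
qed auto

end

theorem mainTheorem4:
  fixes G :: "('a, 'm) monoid_scheme" and H :: "('b, 'n) monoid_scheme"
    and TG :: "'a topology" and TH :: "'b topology"
    and cG :: 'a and cH :: 'b and \<theta>G :: "'a \<Rightarrow> bool" and \<theta>H :: "'b \<Rightarrow> bool"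
  assumes fG: "fermionic G TG cG \<theta>G"
    and fH: "fermionic H TH cH \<theta>H"
    and nontriv: "cH \<noteq> \<one>\<^bsub>H\<^esub>"
  shows "short_exact_top G TG (ftp G H cG cH \<theta>G \<theta>H) (ftp_top G H cG cH TG TH)
           (bos H cH) (bos_top H cH TH) (ftp_incl G H cG cH) (ftp_proj H cH)
       \<and> ((\<exists>g\<in>carrier G. \<theta>G g) \<longrightarrow>
           (let Gev = {g \<in> carrier G. \<not> \<theta>G g};
                Tev = {x \<in> carrier (ftp G H cG cH \<theta>G \<theta>H). \<not> ftp_grading \<theta>G \<theta>H x}
            in short_exact_top (G\<lparr>carrier := Gev\<rparr>) (subtopology TG Gev)
                 ((ftp G H cG cH \<theta>G \<theta>H)\<lparr>carrier := Tev\<rparr>)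
                 (subtopology (ftp_top G H cG cH TG TH) Tev)
                 (bos H cH) (bos_top H cH TH) (ftp_incl G H cG cH) (ftp_proj H cH)))"
proof -
  interpret fermionic_pair G TG cG \<theta>G H TH cH \<theta>H
    using fG fH by (simp add: fermionic_pair_def fermionic_group_def)
  have exact: "short_exact_top G TG tensor tensor_top (bos H cH) (bos_top H cH TH) incl proj"
    by (rule short_exact_ftp[OF nontriv])
  show ?thesis
    unfolding Let_def
    using exact short_exact_top_restrict[OF exact subgroup_ftp_even
        ftp_incl_vimage_even[symmetric] ftp_proj_even_onto]
    by blast
qed

end
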